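(* Let $(K,v)$ be a valued field whose value group $\Gamma$ is dense and regular. If $(K,v)$ is extremal, then $\Gamma$ is divisible.
   Context: $(K,v)$ with valuation ring $\mathcal{O}_v$ and value group $\Gamma$ (and $v(0)=\infty$) is extremal if for every $n\ge1$ and every $F\in K[X_1,\dots,X_n]$ the set $\{v(F(a_1,\dots,a_n)) : a_i\in\mathcal{O}_v\}\subseteq\Gamma\cup\{\infty\}$ has a maximal element. An ordered group is dense if between any two distinct elements there is a third; it is regular if for every $n\ge1$ every open interval containing at least $n$ elements contains an $n$-divisible element. *)

theory Defs
  imports Main "HOL-Library.Poly_Mapping"
begin

text \<open>A (Krull) valuation on a field K with values in an ordered abelian group,
  given on nonzero elements; v(0) = infinity is handled separately (see val_ext).\<close>
definition valuation :: "('k::field \<Rightarrow> 'g::linordered_ab_group_add) \<Rightarrow> bool" where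
  "valuation v \<longleftrightarrow>
     (\<forall>x y. x \<noteq> 0 \<longrightarrow> y \<noteq> 0 \<longrightarrow> v (x * y) = v x + v y) \<and>
     (\<forall>x y. x \<noteq> 0 \<longrightarrow> y \<noteq> 0 \<longrightarrow> x + y \<noteq> 0 \<longrightarrow> min (v x) (v y) \<le> v (x + y))"

definition value_group :: "('k::field \<Rightarrow> 'g::linordered_ab_group_add) \<Rightarrow> 'g set" where
  "value_group v = v ` (UNIV - {0})"

definition val_ring :: "('k::field \<Rightarrow> 'g::linordered_ab_group_add) \<Rightarrow> 'k set" where
  "val_ring v = {x. x = 0 \<or> 0 \<le> v x}"

text \<open>Extended valuation: None stands for infinity = v(0).\<close>
definition val_ext :: "('k::field \<Rightarrow> 'g::linordered_ab_group_add) \<Rightarrow> 'k \<Rightarrow> 'g option" where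
  "val_ext v x = (if x = 0 then None else Some (v x))"

definition le_inf :: "'g::linorder option \<Rightarrow> 'g option \<Rightarrow> bool" where
  "le_inf a b = (case b of None \<Rightarrow> True
                 | Some y \<Rightarrow> (case a of None \<Rightarrow> False | Some x \<Rightarrow> x \<le> y))"

type_synonym 'k mpoly = "(nat \<Rightarrow>\<^sub>0 nat) \<Rightarrow>\<^sub>0 'k"

definition poly_in_vars :: "nat \<Rightarrow> ((nat \<Rightarrow>\<^sub>0 nat) \<Rightarrow>\<^sub>0 'k::zero) \<Rightarrow> bool" where
  "poly_in_vars n F \<longleftrightarrow> (\<forall>m \<in> Poly_Mapping.keys F. Poly_Mapping.keys m \<subseteq> {..<n})"

definition mpoly_eval :: "((nat \<Rightarrow>\<^sub>0 nat) \<Rightarrow>\<^sub>0 'k::comm_semiring_1) \<Rightarrow> (nat \<Rightarrow> 'k) \<Rightarrow> 'k" where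
  "mpoly_eval F a = (\<Sum>m\<in>Poly_Mapping.keys F. Poly_Mapping.lookup F m * (\<Prod>i\<in>Poly_Mapping.keys m. a i ^ Poly_Mapping.lookup m i))"

definition extremal :: "('k::field \<Rightarrow> 'g::linordered_ab_group_add) \<Rightarrow> bool" where
  "extremal v \<longleftrightarrow>
     (\<forall>n::nat. \<forall>F::'k mpoly. poly_in_vars n F \<longrightarrow>
        (\<exists>a. (\<forall>i<n. a i \<in> val_ring v) \<and>
             (\<forall>b. (\<forall>i<n. b i \<in> val_ring v) \<longrightarrow>
                  le_inf (val_ext v (mpoly_eval F b)) (val_ext v (mpoly_eval F a)))))"

fun nmul :: "nat \<Rightarrow> 'g::ab_group_add \<Rightarrow> 'g" where
  "nmul 0 x = 0"
| "nmul (Suc n) x = x + nmul n x"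

definition dense_set :: "'g::linorder set \<Rightarrow> bool" where
  "dense_set G \<longleftrightarrow> (\<forall>a\<in>G. \<forall>b\<in>G. a < b \<longrightarrow> (\<exists>c\<in>G. a < c \<and> c < b))"

definition n_divisible_in :: "'g::ab_group_add set \<Rightarrow> nat \<Rightarrow> 'g \<Rightarrow> bool" where
  "n_divisible_in G n x \<longleftrightarrow> (\<exists>d\<in>G. nmul n d = x)"

definition regular_set :: "'g::linordered_ab_group_add set \<Rightarrow> bool" where
  "regular_set G \<longleftrightarrow>
     (\<forall>n\<ge>1. \<forall>a\<in>G. \<forall>b\<in>G.
        (\<exists>T \<subseteq> G \<inter> {a<..<b}. finite T \<and> card T = n) \<longrightarrow>
        (\<exists>x\<in>G \<inter> {a<..<b}. n_divisible_in G n x))"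

definition divisible_set :: "'g::ab_group_add set \<Rightarrow> bool" where
  "divisible_set G \<longleftrightarrow> (\<forall>x\<in>G. \<forall>n\<ge>1. n_divisible_in G n x)"

end

theory Submission
  imports Defs
begin

(* Suppose the value group \<Gamma> is not divisible.  Then some
   g > 0 in \<Gamma> is not n-divisible for some n \<ge> 1; put N = 2n and pick c with v(c) = g.
   Neither g nor 2g lies in N\<Gamma>.  Consider the polynomial
       F(X,Y) = (c - XY)^N + c (cX)^N + c^2 (cY)^N,
   the sum of the three terms c^i w_i^N (w_0 = c - XY, w_1 = cX, w_2 = cY), whose values
   i*g + N*v(w_i) lie in the pairwise distinct cosets i*g + N\<Gamma> (i = 0, 1, 2).  Hence
   v(F(x,y)) is the least value of a nonzero term.  From this:
     - for all x, y in K, F(x,y) \<noteq> 0 and 2 v(F(x,y)) < 3g + N(3g) (witness_value_bound);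
     - for every \<phi> in \<Gamma> with 2\<phi> < 3g + N(3g) there are x, y in the valuation ring with
       v(F(x,y)) > \<phi> (witness_value_unbounded); density and regularity of \<Gamma> give a value
       d with N*d in a suitable interval, and one takes v(x) = d, y = c/x.
   So v(F) attains no maximum on the valuation ring, contradicting extremality. *)

definition monomial_eval :: "(nat \<Rightarrow>\<^sub>0 nat) \<Rightarrow> (nat \<Rightarrow> 'k::comm_semiring_1) \<Rightarrow> 'k" where
  "monomial_eval m a = (\<Prod>i\<in>Poly_Mapping.keys m. a i ^ Poly_Mapping.lookup m i)"

lemma mpoly_eval_superset:
  assumes "finite S" "Poly_Mapping.keys F \<subseteq> S"
  shows "mpoly_eval F a = (\<Sum>m\<in>S. Poly_Mapping.lookup F m * monomial_eval m a)"
  unfolding mpoly_eval_def monomial_eval_def[symmetric]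
  by (rule sum.mono_neutral_left) (use assms in \<open>auto simp: in_keys_iff\<close>)

lemma monomial_eval_superset:
  assumes "finite S" "Poly_Mapping.keys m \<subseteq> S"
  shows "monomial_eval m a = (\<Prod>i\<in>S. a i ^ Poly_Mapping.lookup m i)"
  unfolding monomial_eval_def
  by (rule prod.mono_neutral_left) (use assms in \<open>auto simp: in_keys_iff\<close>)

lemma mpoly_eval_add: "mpoly_eval (F + G) a = mpoly_eval F a + mpoly_eval G a"
proof -
  let ?S = "Poly_Mapping.keys F \<union> Poly_Mapping.keys G"
  have "mpoly_eval (F + G) a = (\<Sum>m\<in>?S. Poly_Mapping.lookup (F + G) m * monomial_eval m a)"
    using keys_add[of F G] by (intro mpoly_eval_superset) auto
  also have "\<dots> = (\<Sum>m\<in>?S. Poly_Mapping.lookup F m * monomial_eval m a)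
                 + (\<Sum>m\<in>?S. Poly_Mapping.lookup G m * monomial_eval m a)"
    by (simp add: lookup_add distrib_right sum.distrib)
  also have "\<dots> = mpoly_eval F a + mpoly_eval G a"
    by (simp add: mpoly_eval_superset[symmetric])
  finally show ?thesis .
qed

lemma mpoly_eval_sum: "finite A \<Longrightarrow> mpoly_eval (\<Sum>k\<in>A. F k) a = (\<Sum>k\<in>A. mpoly_eval (F k) a)"
  by (induction A rule: finite_induct) (simp_all add: mpoly_eval_add mpoly_eval_def[of 0])

lemma mpoly_eval_single: "mpoly_eval (Poly_Mapping.single m c) a = c * monomial_eval m a"
  by (subst mpoly_eval_superset[of "{m}"]) (auto simp: lookup_single)

lemma poly_in_vars_add: "poly_in_vars n F \<Longrightarrow> poly_in_vars n G \<Longrightarrow> poly_in_vars n (F + G)"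
  unfolding poly_in_vars_def using keys_add[of F G] by blast

lemma poly_in_vars_sum:
  "finite A \<Longrightarrow> (\<And>k. k \<in> A \<Longrightarrow> poly_in_vars n (F k)) \<Longrightarrow> poly_in_vars n (\<Sum>k\<in>A. F k)"
  by (induction A rule: finite_induct) (auto simp: poly_in_vars_add, simp add: poly_in_vars_def)

lemma poly_in_vars_single:
  "Poly_Mapping.keys m \<subseteq> {..<n} \<Longrightarrow> poly_in_vars n (Poly_Mapping.single m c)"
  unfolding poly_in_vars_def by simp

definition monomial2 :: "nat \<Rightarrow> nat \<Rightarrow> (nat \<Rightarrow>\<^sub>0 nat)" where
  "monomial2 i j = Poly_Mapping.single 0 i + Poly_Mapping.single 1 j"

lemma keys_monomial2: "Poly_Mapping.keys (monomial2 i j) \<subseteq> {..<2}"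
  unfolding monomial2_def
  using keys_add[of "Poly_Mapping.single 0 i" "Poly_Mapping.single (1::nat) j"]
  by (fastforce split: if_splits)

lemma monomial_eval_monomial2: "monomial_eval (monomial2 i j) a = a 0 ^ i * a 1 ^ j"
  by (subst monomial_eval_superset[OF _ keys_monomial2])
     (simp_all add: monomial2_def lookup_add lookup_single when_def lessThan_Suc numeral_2_eq_2 mult.commute)

definition witness_base :: "'k::field \<Rightarrow> 'k \<Rightarrow> 'k \<Rightarrow> nat \<Rightarrow> 'k" where
  "witness_base c x y i = (if i = 0 then c - x * y else if i = 1 then c * x else c * y)"

definition witness_term :: "'k::field \<Rightarrow> nat \<Rightarrow> 'k \<Rightarrow> 'k \<Rightarrow> nat \<Rightarrow> 'k" where
  "witness_term c N x y i = c ^ i * witness_base c x y i ^ N"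

definition witness_value :: "'k::field \<Rightarrow> nat \<Rightarrow> 'k \<Rightarrow> 'k \<Rightarrow> 'k" where
  "witness_value c N x y = (\<Sum>i\<in>{0, 1, 2}. witness_term c N x y i)"

definition witness_poly :: "'k::field \<Rightarrow> nat \<Rightarrow> 'k mpoly" where
  "witness_poly c N =
     (\<Sum>k\<le>N. Poly_Mapping.single (monomial2 k k) (of_nat (N choose k) * (- 1) ^ k * c ^ (N - k)))
     + Poly_Mapping.single (monomial2 N 0) (c ^ (N + 1))
     + Poly_Mapping.single (monomial2 0 N) (c ^ (N + 2))"

lemma witness_value_explicit:
  "witness_value c N x y = (c - x * y) ^ N + c ^ (N + 1) * x ^ N + c ^ (N + 2) * y ^ N"
  by (simp add: witness_value_def witness_term_def witness_base_def power_mult_distrib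
      power_add power2_eq_square algebra_simps)

text \<open>The polynomial evaluates to the witness value; the only computation is the binomial
  expansion of (c - XY)^N.\<close>

lemma witness_poly_eval: "mpoly_eval (witness_poly c N) a = witness_value c N (a 0) (a 1)"
proof -
  have "(c - a 0 * a 1) ^ N = (- (a 0 * a 1) + c) ^ N" by simp
  also have "\<dots> = (\<Sum>k\<le>N. of_nat (N choose k) * (- (a 0 * a 1)) ^ k * c ^ (N - k))"
    by (rule binomial_ring)
  also have "\<dots> = (\<Sum>k\<le>N. of_nat (N choose k) * (- 1) ^ k * c ^ (N - k) * (a 0 ^ k * a 1 ^ k))"
    unfolding power_minus[of "a 0 * a 1"] power_mult_distrib by (simp add: mult_ac)
  finally have binomial:
    "(\<Sum>k\<le>N. of_nat (N choose k) * (- 1) ^ k * c ^ (N - k) * (a 0 ^ k * a 1 ^ k))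
       = (c - a 0 * a 1) ^ N" ..
  show ?thesis
    unfolding witness_poly_def mpoly_eval_add mpoly_eval_sum[OF finite_atMost]
      mpoly_eval_single monomial_eval_monomial2 binomial witness_value_explicit
    by simp
qed

lemma witness_poly_vars: "poly_in_vars 2 (witness_poly c N)"
  unfolding witness_poly_def
  by (intro poly_in_vars_add poly_in_vars_sum poly_in_vars_single keys_monomial2 finite_atMost)

lemma nmul_zero [simp]: "nmul n (0::'g::ab_group_add) = 0"
  by (induction n) auto

lemma nmul_one [simp]: "nmul 1 x = x" and nmul_two [simp]: "nmul 2 x = x + x"
  by (simp_all add: numeral_eq_Suc)

lemma nmul_add: "nmul n (x + y) = nmul n x + nmul n (y::'g::ab_group_add)"
  by (induction n) (simp_all add: add_ac)

lemma nmul_add_left: "nmul (m + n) (x::'g::ab_group_add) = nmul m x + nmul n x"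
  by (induction m) (simp_all add: add.assoc)

lemma nmul_diff: "nmul n (x - y) = nmul n x - nmul n (y::'g::ab_group_add)"
  by (metis add_diff_cancel eq_diff_eq nmul_add)

lemma nmul_mult: "nmul (m * n) (x::'g::ab_group_add) = nmul m (nmul n x)"
  by (induction m) (simp_all add: nmul_add_left)

lemma nmul_mono: "x \<le> y \<Longrightarrow> nmul n x \<le> nmul n (y::'g::linordered_ab_group_add)"
  by (induction n) (simp_all add: add_mono)

lemma nmul_strict_mono:
  assumes "n \<ge> 1"
  shows "strict_mono (nmul n :: 'g::linordered_ab_group_add \<Rightarrow> 'g)"
proof (rule strict_monoI)
  fix x y :: 'g
  assume "x < y"
  show "nmul n x < nmul n y"
    using assms
  proof (induction n)
    case (Suc n)
    then show ?case
      using \<open>x < y\<close> by (cases "n = 0") (simp_all add: add_strict_mono)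
  qed simp
qed

lemma double_less_imp_less: "(a::'g::linordered_ab_group_add) + a < b + b \<Longrightarrow> a < b"
  by (meson add_mono not_less)

lemma double_lower_bound_less:
  "(s::'g::linordered_ab_group_add) \<le> a \<Longrightarrow> s \<le> b \<Longrightarrow> a \<noteq> b \<Longrightarrow> s + s < a + b"
  by (metis add_le_less_mono add_less_le_mono add.commute neq_iff)

lemma dense_interval_card:
  fixes G :: "'g::linorder set"
  assumes dense: "dense_set G" and "a \<in> G" "b \<in> G" "a < b"
  shows "\<exists>T \<subseteq> G \<inter> {a<..<b}. finite T \<and> card T = n"
  using assms(3,4)
proof (induction n arbitrary: b)
  case 0
  show ?case by (intro exI[of _ "{}"]) auto
next
  case (Suc n)
  obtain c where c: "c \<in> G" "a < c" "c < b"
    using dense \<open>a \<in> G\<close> Suc.prems unfolding dense_set_def by blast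
  obtain T where T: "T \<subseteq> G \<inter> {a<..<c}" "finite T" "card T = n"
    using Suc.IH[OF c(1,2)] by blast
  have "c \<notin> T" using T(1) by auto
  then have "insert c T \<subseteq> G \<inter> {a<..<b}" "card (insert c T) = Suc n"
    using T c by (auto simp: subset_iff intro: less_trans)
  then show ?case using T(2) by blast
qed

lemma dense_regular_divisible_in_interval:
  fixes G :: "'g::linordered_ab_group_add set"
  assumes "dense_set G" "regular_set G" "n \<ge> 1" "a \<in> G" "b \<in> G" "a < b"
  shows "\<exists>x\<in>G \<inter> {a<..<b}. n_divisible_in G n x"
  using assms dense_interval_card[of G a b n] unfolding regular_set_def by blast

locale valued_field =
  fixes v :: "'k::field \<Rightarrow> 'g::linordered_ab_group_add"
  assumes valuation: "valuation v"
begin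

lemma v_mult: "x \<noteq> 0 \<Longrightarrow> y \<noteq> 0 \<Longrightarrow> v (x * y) = v x + v y"
  using valuation unfolding valuation_def by blast

lemma v_ultrametric: "x \<noteq> 0 \<Longrightarrow> y \<noteq> 0 \<Longrightarrow> x + y \<noteq> 0 \<Longrightarrow> min (v x) (v y) \<le> v (x + y)"
  using valuation unfolding valuation_def by blast

lemma v_one: "v 1 = 0"
  using v_mult[of 1 1] by simp

lemma v_minus_one: "v (- 1) = 0"
  using v_mult[of "- 1" "- 1"] by (simp add: v_one)

lemma v_uminus: "v (- x) = v x"
  using v_mult[of "- 1" x] by (cases "x = 0") (simp_all add: v_minus_one)

lemma v_inverse: "x \<noteq> 0 \<Longrightarrow> v (inverse x) = - v x"
  using v_mult[of x "inverse x"] by (simp add: v_one eq_neg_iff_add_eq_0 add.commute)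

lemma v_divide: "x \<noteq> 0 \<Longrightarrow> y \<noteq> 0 \<Longrightarrow> v (x / y) = v x - v y"
  by (simp add: divide_inverse v_mult v_inverse)

lemma v_power: "x \<noteq> 0 \<Longrightarrow> v (x ^ n) = nmul n (v x)"
  by (induction n) (simp_all add: v_one v_mult)

lemma v_add_less:
  assumes "x \<noteq> 0" "y \<noteq> 0" "v x < v y"
  shows "x + y \<noteq> 0 \<and> v (x + y) = v x"
proof
  show sum_nonzero: "x + y \<noteq> 0"
    using assms v_uminus[of x] by (metis add_eq_0_iff less_irrefl)
  have "v x \<le> v (x + y)"
    using v_ultrametric[OF assms(1,2) sum_nonzero] assms(3) by simp
  moreover have "min (v (x + y)) (v (- y)) \<le> v x"
    using v_ultrametric[OF sum_nonzero, of "- y"] assms(1,2) by simp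
  then have "v (x + y) \<le> v x"
    using assms(3) by (auto simp: v_uminus min_le_iff_disj not_le[symmetric])
  ultimately show "v (x + y) = v x" by simp
qed

lemma v_add_distinct:
  assumes "x \<noteq> 0" "y \<noteq> 0" "v x \<noteq> v y"
  shows "x + y \<noteq> 0 \<and> v (x + y) = min (v x) (v y)"
  using assms v_add_less[of x y] v_add_less[of y x] by (cases "v x < v y") (auto simp: add.commute)

lemma v_sum_distinct:
  assumes "finite I" "\<exists>i\<in>I. f i \<noteq> 0"
    and "\<And>i j. i \<in> I \<Longrightarrow> j \<in> I \<Longrightarrow> i \<noteq> j \<Longrightarrow> f i \<noteq> 0 \<Longrightarrow> f j \<noteq> 0 \<Longrightarrow>
      v (f i) \<noteq> v (f j)"
  shows "sum f I \<noteq> 0 \<and> v (sum f I) = Min ((\<lambda>i. v (f i)) ` {i\<in>I. f i \<noteq> 0})"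
  using assms
proof (induction I rule: finite_induct)
  case empty
  then show ?case by simp
next
  case (insert a I)
  let ?Z = "{i\<in>I. f i \<noteq> 0}"
  show ?case
  proof (cases "?Z = {}")
    case True
    then have "sum f I = 0" "f a \<noteq> 0" and "{i\<in>insert a I. f i \<noteq> 0} = {a}"
      using insert.prems(1) by auto
    then show ?thesis using insert.hyps by simp
  next
    case False
    then have IH: "sum f I \<noteq> 0 \<and> v (sum f I) = Min ((\<lambda>i. v (f i)) ` ?Z)"
      using insert by blast
    have "Min ((\<lambda>i. v (f i)) ` ?Z) \<in> (\<lambda>i. v (f i)) ` ?Z"
      using False insert.hyps(1) by (intro Min_in) auto
    then obtain j where j: "j \<in> ?Z" "v (sum f I) = v (f j)"
      using IH by auto
    show ?thesis
    proof (cases "f a = 0")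
      case True
      then have "{i\<in>insert a I. f i \<noteq> 0} = ?Z" by auto
      then show ?thesis using True IH insert.hyps by simp
    next
      case False
      have "v (f a) \<noteq> v (sum f I)"
        using j False insert.hyps(2) insert.prems(2)[of a j] by auto
      then have "f a + sum f I \<noteq> 0 \<and> v (f a + sum f I) = min (v (f a)) (Min ((\<lambda>i. v (f i)) ` ?Z))"
        using v_add_distinct[of "f a" "sum f I"] False IH by simp
      moreover have "{i\<in>insert a I. f i \<noteq> 0} = insert a ?Z" using False by auto
      ultimately show ?thesis
        using insert.hyps \<open>?Z \<noteq> {}\<close> by simp
    qed
  qed
qed

lemma value_group_v: "x \<noteq> 0 \<Longrightarrow> v x \<in> value_group v"
  unfolding value_group_def by auto

lemma value_group_obtain: "a \<in> value_group v \<Longrightarrow> \<exists>x. x \<noteq> 0 \<and> v x = a"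
  unfolding value_group_def by auto

lemma value_group_zero: "0 \<in> value_group v"
  using value_group_v[of 1] v_one by simp

lemma value_group_add: "a \<in> value_group v \<Longrightarrow> b \<in> value_group v \<Longrightarrow> a + b \<in> value_group v"
  by (metis value_group_obtain value_group_v v_mult mult_eq_0_iff)

lemma value_group_uminus: "a \<in> value_group v \<Longrightarrow> - a \<in> value_group v"
  by (metis value_group_obtain value_group_v v_inverse inverse_nonzero_iff_nonzero)

lemma value_group_diff: "a \<in> value_group v \<Longrightarrow> b \<in> value_group v \<Longrightarrow> a - b \<in> value_group v"
  using value_group_add[of a "- b"] value_group_uminus[of b] by simp

lemma value_group_nmul: "a \<in> value_group v \<Longrightarrow> nmul n a \<in> value_group v"
  by (induction n) (simp_all add: value_group_zero value_group_add)

lemma positive_not_divisible: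
  assumes "\<not> divisible_set (value_group v)"
  obtains g n where "g \<in> value_group v" "0 < g" "n \<ge> 1" "\<not> n_divisible_in (value_group v) n g"
proof -
  obtain x n where x: "x \<in> value_group v" "n \<ge> 1" "\<not> n_divisible_in (value_group v) n x"
    using assms unfolding divisible_set_def by blast
  have "x \<noteq> 0" using x(3) value_group_zero unfolding n_divisible_in_def by force
  have "\<not> n_divisible_in (value_group v) n (- x)"
    using x(3) value_group_uminus unfolding n_divisible_in_def
    by (metis add.inverse_inverse nmul_diff nmul_zero diff_0)
  then show ?thesis
    using that x value_group_uminus[OF x(1)] \<open>x \<noteq> 0\<close>
    by (cases "0 < x") (auto simp: neg_less_0_iff_less linorder_neq_iff)
qed

end

locale nondivisible_value = valued_field v for v :: "'k::field \<Rightarrow> 'g::linordered_ab_group_add" +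
  fixes c :: 'k and g :: 'g and n :: nat
  assumes c_nonzero: "c \<noteq> 0" and v_c: "v c = g" and g_pos: "0 < g" and n_pos: "n \<ge> 1"
    and g_not_divisible: "\<not> n_divisible_in (value_group v) n g"
begin

abbreviation N :: nat where "N \<equiv> 2 * n"

text \<open>Neither g nor 2g is a multiple N*e of a value e.  Hence the cosets
  i*g + N*\<Gamma> (i = 0, 1, 2) are pairwise distinct.\<close>

lemma multiple_not_divisible:
  assumes e: "e \<in> value_group v" and k: "k \<in> {1, 2}"
  shows "nmul N e \<noteq> nmul k g"
proof
  assume eq: "nmul N e = nmul k g"
  have not_g: "nmul n e' \<noteq> g" if "e' \<in> value_group v" for e'
    using g_not_divisible that unfolding n_divisible_in_def by blast
  show False
  proof (cases "k = 1")
    case True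
    have "nmul n (nmul 2 e) = g"
      using eq True nmul_mult[of n 2 e] by (simp add: mult.commute)
    then show False using not_g value_group_nmul[OF e] by blast
  next
    case False
    then have "nmul 2 (nmul n e) = nmul 2 g"
      using eq k nmul_mult[of 2 n e] by simp
    then have "nmul n e = g"
      using strict_mono_eq[OF nmul_strict_mono[of 2], of "nmul n e" g] by simp
    then show False using not_g e by blast
  qed
qed

lemma witness_term_eq_0: "witness_term c N x y i = 0 \<longleftrightarrow> witness_base c x y i = 0"
  using c_nonzero n_pos by (simp add: witness_term_def)

lemma v_witness_term:
  "witness_base c x y i \<noteq> 0 \<Longrightarrow>
     v (witness_term c N x y i) = nmul i g + nmul N (v (witness_base c x y i))"
  using c_nonzero by (simp add: witness_term_def v_mult v_power v_c)

text \<open>The value of the i-th nonzero term lies in the coset i*g + N*\<Gamma>, so nonzero terms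
  have distinct values.\<close>

lemma witness_terms_distinct:
  assumes "i \<in> {0, 1, 2}" "j \<in> {0, 1, 2}" "i \<noteq> j"
    and "witness_term c N x y i \<noteq> 0" "witness_term c N x y j \<noteq> 0"
  shows "v (witness_term c N x y i) \<noteq> v (witness_term c N x y j)"
proof -
  have distinct_if_less: "v (witness_term c N x y i) \<noteq> v (witness_term c N x y j)"
    if ij: "i < j" "j \<in> {0, 1, 2}" and nonzero: "witness_base c x y i \<noteq> 0" "witness_base c x y j \<noteq> 0"
    for i j
  proof
    let ?ei = "v (witness_base c x y i)" and ?ej = "v (witness_base c x y j)"
    assume "v (witness_term c N x y i) = v (witness_term c N x y j)"
    then have "nmul i g + nmul N ?ei = nmul i g + nmul (j - i) g + nmul N ?ej"
      using nonzero ij(1) nmul_add_left[of i "j - i" g] by (simp add: v_witness_term)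
    then have "nmul N (?ei - ?ej) = nmul (j - i) g"
      by (simp add: nmul_diff algebra_simps)
    moreover have "?ei - ?ej \<in> value_group v"
      using nonzero by (intro value_group_diff value_group_v)
    moreover have "j - i \<in> {1, 2}" using ij by auto
    ultimately show False using multiple_not_divisible by blast
  qed
  show ?thesis
    using assms distinct_if_less[of i j] distinct_if_less[of j i]
    by (cases "i < j") (auto simp: witness_term_eq_0)
qed

lemma witness_value_min:
  assumes "\<exists>i\<in>{0, 1, 2}. witness_term c N x y i \<noteq> 0"
  shows "witness_value c N x y \<noteq> 0 \<and>
    v (witness_value c N x y) =
      Min ((\<lambda>i. v (witness_term c N x y i)) ` {i\<in>{0, 1, 2}. witness_term c N x y i \<noteq> 0})"
  unfolding witness_value_def
  by (rule v_sum_distinct) (use assms witness_terms_distinct in auto)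

lemma witness_value_le_term:
  assumes "i \<in> {0, 1, 2}" "witness_base c x y i \<noteq> 0"
  shows "witness_value c N x y \<noteq> 0 \<and> v (witness_value c N x y) \<le> v (witness_term c N x y i)"
  using witness_value_min[of x y] assms by (auto simp: witness_term_eq_0 intro: Min_le)

text \<open>The critical bound 3g + N*(3g): twice v(F(x,y)) always stays below it.\<close>

definition value_bound :: 'g where
  "value_bound = g + g + g + nmul N (g + g + g)"

lemma g_le_nmul_N: "g \<le> nmul N g"
proof -
  have "0 \<le> nmul (N - 1) g" using nmul_mono[of 0 g] g_pos by simp
  moreover have "nmul N g = g + nmul (N - 1) g"
    using n_pos nmul_add_left[of 1 "N - 1" g] by simp
  ultimately show ?thesis by simp
qed

lemma witness_value_bound:
  "witness_value c N x y \<noteq> 0 \<and>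
     v (witness_value c N x y) + v (witness_value c N x y) < value_bound"
proof (cases "x * y = 0 \<or> g < v (x * y)")
  case True
  (* then c - xy has value g, and the term (c - xy)^N bounds v(F) by N*g *)
  have "witness_base c x y 0 \<noteq> 0 \<and> v (witness_base c x y 0) = g"
  proof (cases "x * y = 0")
    case False
    then have "g < v (- (x * y))" using True by (simp add: v_uminus)
    then show ?thesis
      using v_add_less[of c "- (x * y)"] c_nonzero False
      by (simp add: witness_base_def v_c)
  qed (auto simp: witness_base_def c_nonzero v_c)
  then have "witness_value c N x y \<noteq> 0" "v (witness_value c N x y) \<le> nmul N g"
    using witness_value_le_term[of 0 x y] by (simp_all add: v_witness_term)
  moreover have "nmul N g + nmul N g < value_bound"
  proof -
    have "nmul N g + nmul N g = nmul N (g + g)" by (simp add: nmul_add)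
    also have "\<dots> \<le> nmul N (g + g + g)" using g_pos by (intro nmul_mono) simp
    also have "\<dots> < value_bound" unfolding value_bound_def using g_pos by (simp add: add_pos_pos)
    finally show ?thesis .
  qed
  ultimately show ?thesis by (meson add_mono le_less_trans)
next
  case False
  (* then v(x) + v(y) \<le> g, and the terms c (cx)^N and c^2 (cy)^N have distinct values
     whose sum is at most the bound *)
  then have nonzero: "x \<noteq> 0" "y \<noteq> 0" and small: "v x + v y \<le> g"
    by (auto simp: v_mult)
  let ?t = "witness_term c N x y"
  have base_nonzero: "witness_base c x y 1 \<noteq> 0" "witness_base c x y 2 \<noteq> 0"
    using nonzero c_nonzero by (simp_all add: witness_base_def)
  have F: "witness_value c N x y \<noteq> 0" "v (witness_value c N x y) \<le> v (?t 1)"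
    "v (witness_value c N x y) \<le> v (?t 2)"
    using witness_value_le_term[of 1 x y] witness_value_le_term[of 2 x y] base_nonzero by auto
  have "v (?t 1) \<noteq> v (?t 2)"
    using witness_terms_distinct[of 1 2 x y] base_nonzero by (simp add: witness_term_eq_0)
  then have "v (witness_value c N x y) + v (witness_value c N x y) < v (?t 1) + v (?t 2)"
    using F by (intro double_lower_bound_less)
  also have "v (?t 1) + v (?t 2) = g + g + g + nmul N (g + g + (v x + v y))"
  proof -
    have "v (?t 1) = g + nmul N (g + v x)" "v (?t 2) = g + g + nmul N (g + v y)"
      using base_nonzero c_nonzero nonzero
      by (simp_all add: v_witness_term witness_base_def v_mult v_c)
    then show ?thesis by (simp add: nmul_add algebra_simps)
  qed
  also have "\<dots> \<le> value_bound"
    unfolding value_bound_def using small by (intro add_left_mono nmul_mono) simp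
  finally show ?thesis using F(1) by simp
qed

text \<open>The bound splits as (g + N*g) + (2g + 2N*g); the two summands are the thresholds
  for the values of the terms c (cx)^N and c^2 (cy)^N below.\<close>

lemma value_bound_split: "value_bound = (g + nmul N g) + (g + g + nmul N g + nmul N g)"
  unfolding value_bound_def by (simp add: nmul_add add_ac)

lemma exists_value_in_window:
  assumes dense: "dense_set (value_group v)" and regular: "regular_set (value_group v)"
    and phi: "\<phi> \<in> value_group v" "\<phi> + \<phi> < value_bound"
  obtains d where "d \<in> value_group v" "0 < d" "d < g"
    "\<phi> - (g + nmul N g) < nmul N d" "nmul N d < g + g + nmul N g + nmul N g - \<phi>"
proof -
  define K where "K = nmul N g"
  define lo where "lo = max (\<phi> - (g + K)) 0"
  define hi where "hi = min (g + g + K + K - \<phi>) K"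
  have g_in: "g \<in> value_group v" using value_group_v[OF c_nonzero] v_c by simp
  have lo_in: "lo \<in> value_group v" and hi_in: "hi \<in> value_group v"
    unfolding lo_def hi_def K_def max_def min_def
    by (simp_all add: phi(1) g_in value_group_zero value_group_add value_group_diff
        value_group_nmul)
  have K_pos: "0 < K" and g_le_K: "g \<le> K"
    using g_le_nmul_N g_pos unfolding K_def by simp_all
  have sum: "\<phi> + \<phi> < (g + K) + (g + g + K + K)"
    using phi(2) unfolding value_bound_split K_def .
  have "lo < hi"
  proof -
    have "\<phi> - (g + K) < g + g + K + K - \<phi>"
      using sum by (simp add: algebra_simps)
    moreover have "\<phi> < g + K + K"
    proof (rule double_less_imp_less)
      have "(g + K) + (g + g + K + K) \<le> (g + K + K) + (g + K + K)"
        using g_le_K by (simp add: add_ac add_left_mono)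
      then show "\<phi> + \<phi> < (g + K + K) + (g + K + K)" by (rule less_le_trans[OF sum])
    qed
    then have "\<phi> - (g + K) < K" by (simp add: algebra_simps)
    moreover have "0 < g + g + K + K - \<phi>"
    proof -
      have "g + K + K < g + g + K + K" using g_pos by simp
      with \<open>\<phi> < g + K + K\<close> have "\<phi> < g + g + K + K" by (rule less_trans)
      then show ?thesis by (simp add: algebra_simps)
    qed
    ultimately show ?thesis unfolding lo_def hi_def using K_pos by simp
  qed
  then obtain z where z: "z \<in> value_group v" "lo < z" "z < hi" "n_divisible_in (value_group v) N z"
    using dense_regular_divisible_in_interval[OF dense regular _ lo_in hi_in, of N] n_pos by auto
  then obtain d where d: "d \<in> value_group v" "nmul N d = z"
    unfolding n_divisible_in_def by blast
  have mono: "strict_mono (nmul N :: 'g \<Rightarrow> 'g)"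
    using n_pos by (intro nmul_strict_mono) simp
  have "0 < d" using strict_mono_less[OF mono, of 0 d] z(2) d(2) unfolding lo_def by simp
  moreover have "d < g" using strict_mono_less[OF mono, of d g] z(3) d(2) unfolding hi_def K_def by simp
  ultimately show ?thesis
    using that d z(2,3) unfolding lo_def hi_def K_def by simp
qed

text \<open>Hence v(F) exceeds every such \<phi> somewhere on the valuation ring: take v(x) = d and
  y = c/x, so that the term (c - xy)^N vanishes.\<close>

lemma witness_value_unbounded:
  assumes "dense_set (value_group v)" "regular_set (value_group v)"
    and "\<phi> \<in> value_group v" "\<phi> + \<phi> < value_bound"
  shows "\<exists>x\<in>val_ring v. \<exists>y\<in>val_ring v. witness_value c N x y \<noteq> 0 \<and> \<phi> < v (witness_value c N x y)"
proof -
  obtain d where d: "d \<in> value_group v" "0 < d" "d < g"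
    "\<phi> - (g + nmul N g) < nmul N d" "nmul N d < g + g + nmul N g + nmul N g - \<phi>"
    using exists_value_in_window[OF assms] .
  obtain x where x: "x \<noteq> 0" "v x = d" using value_group_obtain[OF d(1)] by blast
  define y where "y = c / x"
  have y: "y \<noteq> 0" "v y = g - d"
    unfolding y_def using x c_nonzero by (simp_all add: v_divide v_c)
  have integral: "x \<in> val_ring v" "y \<in> val_ring v"
    unfolding val_ring_def using x y d(2,3) by auto
  let ?t = "witness_term c N x y"
  have t0: "?t 0 = 0"
    unfolding witness_term_def witness_base_def y_def using x(1) n_pos by simp
  have base: "witness_base c x y 1 = c * x" "witness_base c x y 2 = c * y"
    by (simp_all add: witness_base_def)
  have base_nonzero: "witness_base c x y 1 \<noteq> 0" "witness_base c x y 2 \<noteq> 0"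
    unfolding base using x y c_nonzero by simp_all
  have t1: "?t 1 \<noteq> 0" "\<phi> < v (?t 1)"
  proof -
    show "?t 1 \<noteq> 0" using base_nonzero(1) by (simp add: witness_term_eq_0)
    have "v (?t 1) = g + nmul N (g + d)"
      unfolding v_witness_term[OF base_nonzero(1)] base using x c_nonzero by (simp add: v_mult v_c)
    also have "\<dots> = g + nmul N g + nmul N d" by (simp add: nmul_add add_ac)
    finally have "v (?t 1) = g + nmul N g + nmul N d" .
    moreover have "\<phi> < g + nmul N g + nmul N d" using d(4) by (simp add: algebra_simps)
    ultimately show "\<phi> < v (?t 1)" by simp
  qed
  have t2: "\<phi> < v (?t 2)"
  proof -
    have "v (?t 2) = g + g + nmul N (g + (g - d))"
      unfolding v_witness_term[OF base_nonzero(2)] base using y c_nonzero by (simp add: v_mult v_c)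
    also have "\<dots> = g + g + nmul N g + nmul N g - nmul N d"
      by (simp add: nmul_add nmul_diff algebra_simps)
    finally have "v (?t 2) = g + g + nmul N g + nmul N g - nmul N d" .
    moreover have "\<phi> < g + g + nmul N g + nmul N g - nmul N d"
      using d(5) by (simp add: less_diff_eq add.commute)
    ultimately show ?thesis by simp
  qed
  let ?Z = "{i\<in>{0, 1, 2}. ?t i \<noteq> 0}"
  have F: "witness_value c N x y \<noteq> 0" "v (witness_value c N x y) = Min ((\<lambda>i. v (?t i)) ` ?Z)"
    using witness_value_min[of x y] t1 by auto
  have "Min ((\<lambda>i. v (?t i)) ` ?Z) \<in> (\<lambda>i. v (?t i)) ` ?Z"
    using t1 by (intro Min_in) auto
  then have "\<phi> < v (witness_value c N x y)"
    unfolding F(2) using t0 t1 t2 by auto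
  then show ?thesis using F(1) integral by blast
qed

end

lemma (in valued_field) extremal_two_variables:
  assumes "extremal v" "poly_in_vars 2 F"
  obtains a where "a 0 \<in> val_ring v" "a 1 \<in> val_ring v"
    "\<And>b. b 0 \<in> val_ring v \<Longrightarrow> b 1 \<in> val_ring v \<Longrightarrow> mpoly_eval F a \<noteq> 0 \<Longrightarrow>
       mpoly_eval F b \<noteq> 0 \<Longrightarrow> v (mpoly_eval F b) \<le> v (mpoly_eval F a)"
proof -
  obtain a where a: "\<forall>i<2. a i \<in> val_ring v"
    and max: "\<And>b. \<forall>i<2. b i \<in> val_ring v \<Longrightarrow>
                  le_inf (val_ext v (mpoly_eval F b)) (val_ext v (mpoly_eval F a))"
    using assms unfolding extremal_def by blast
  have "v (mpoly_eval F b) \<le> v (mpoly_eval F a)"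
    if "b 0 \<in> val_ring v" "b 1 \<in> val_ring v" "mpoly_eval F a \<noteq> 0" "mpoly_eval F b \<noteq> 0" for b
  proof -
    have "\<forall>i<2. b i \<in> val_ring v" using that(1,2) by (auto simp: less_2_cases_iff)
    then have "le_inf (val_ext v (mpoly_eval F b)) (val_ext v (mpoly_eval F a))" by (rule max)
    then show ?thesis using that(3,4) unfolding le_inf_def val_ext_def by simp
  qed
  moreover have "a 0 \<in> val_ring v" "a 1 \<in> val_ring v" using a by simp_all
  ultimately show ?thesis using that by blast
qed

theorem proposition3p4:
  fixes v :: "'k::field \<Rightarrow> 'g::linordered_ab_group_add"
  assumes "valuation v"
    and "dense_set (value_group v)"
    and "regular_set (value_group v)"
    and "extremal v"
  shows "divisible_set (value_group v)"
proof (rule ccontr)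
  assume "\<not> divisible_set (value_group v)"
  interpret valued_field v using assms(1) by unfold_locales
  obtain g n where g: "g \<in> value_group v" "0 < g" "n \<ge> 1" "\<not> n_divisible_in (value_group v) n g"
    using positive_not_divisible[OF \<open>\<not> divisible_set (value_group v)\<close>] .
  obtain c where "c \<noteq> 0" "v c = g" using value_group_obtain[OF g(1)] by blast
  interpret nondivisible_value v c g n using \<open>c \<noteq> 0\<close> \<open>v c = g\<close> g by unfold_locales
  obtain a where maximal: "\<And>b. b 0 \<in> val_ring v \<Longrightarrow> b 1 \<in> val_ring v \<Longrightarrow>
       mpoly_eval (witness_poly c N) a \<noteq> 0 \<Longrightarrow> mpoly_eval (witness_poly c N) b \<noteq> 0 \<Longrightarrow>
       v (mpoly_eval (witness_poly c N) b) \<le> v (mpoly_eval (witness_poly c N) a)"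
    using extremal_two_variables[OF assms(4) witness_poly_vars] by blast
  let ?\<phi> = "v (witness_value c N (a 0) (a 1))"
  have "?\<phi> \<in> value_group v" "?\<phi> + ?\<phi> < value_bound"
    using witness_value_bound value_group_v by blast+
  then obtain x y where xy: "x \<in> val_ring v" "y \<in> val_ring v"
    "witness_value c N x y \<noteq> 0" "?\<phi> < v (witness_value c N x y)"
    using witness_value_unbounded[OF assms(2,3)] by blast
  have "v (witness_value c N x y) \<le> ?\<phi>"
    using maximal[of "\<lambda>i. if i = 0 then x else y"] xy witness_value_bound
    by (simp add: witness_poly_eval)
  then show False using xy(4) by simp
qed

end
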